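(* Consider the two-sided market model described in the context, and suppose the ISP charges no membership fee to consumers ($c=0$), so that every consumer participates ($x_t=x_0$), and chooses only the CP fee $b$ to maximize its revenue. Then the revenue-maximizing CP fee is $$ b_{opt}=\begin{cases} a, & \text{if } a> \frac{\lambda}{2}\frac{x_0^{2-\gamma}}{\gamma-2},\\[4pt] \frac{\lambda}{\gamma-2}x_0^{2-\gamma}-a, & \text{if } 0\leq a \leq \frac{\lambda}{2}\frac{x_0^{2-\gamma}}{\gamma-2}.\end{cases} $$
   Context: Model (a monopolist ISP between consumers and content providers (CPs)). Fix exponents $\gamma>2$, $\beta>2$. Consumer types $x$ have density $x^{-\gamma}$ on $x\ge x_0:=(\frac{1}{\gamma-1})^{\frac{1}{\gamma-1}}$; CP types $y$ have density $y^{-\beta}$ on $y\ge y_0:=(\frac{1}{\beta-1})^{\frac{1}{\beta-1}}$. Write $X(s)=\int_s^\infty x^{1-\gamma}dx$, $Y(s)=\int_s^\infty y^{1-\beta}dy$, $\bar X=X(x_0)=\frac{x_0^{2-\gamma}}{\gamma-2}$, $\bar Y=Y(y_0)=\frac{y_0^{2-\beta}}{\beta-2}$, $T_0=\bar X\bar Y$. If consumers of types $\ge x_t$ and CPs of types $\ge y_t$ participate ($x_t\ge x_0$, $y_t\ge y_0$), total traffic is $T=\sqrt{T_0X(x_t)Y(y_t)}$ and network speed is $T_0/T$. A participating consumer of type $x$ gets utility $\phi\big(\int_{y_t}^\infty \frac{T_0}{T}x y^{1-\beta}dy\big)-c$, where $\phi$ is a nonnegative concave function and $c\ge 0$ is the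 membership fee; a participating CP of type $y$ gets utility $\lambda\int_{x_t}^\infty\frac{T_0}{T}x^{1-\gamma}y\,dx-by-ay$, where $\lambda>0$ is an exchange rate, $a\ge 0$ is the CP cost parameter and $b$ the CP fee. The ISP's revenue is $\mathcal R=c\int_{x_t}^\infty x^{-\gamma}dx+b\,Y(y_t)$. The ISP selects thresholds and charges the prices at which the threshold types are exactly indifferent (utility $0$); here with $c=0$ this means $x_t=x_0$ and $b=\lambda\int_{x_0}^\infty\frac{T_0}{T}x^{1-\gamma}dx-a$, and the optimal $b$ is the one corresponding to the revenue-maximizing $y_t\ge y_0$. *)

theory Defs
  imports "HOL-Analysis.Analysis"
begin

text \<open>Lower end of the type support: (1/(e-1))^(1/(e-1)) for exponent e
  (x_0 for consumers with e = gamma, y_0 for CPs with e = beta).\<close>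
definition type_min :: "real \<Rightarrow> real" where
  "type_min e = (1 / (e - 1)) powr (1 / (e - 1))"

definition tail_mass :: "real \<Rightarrow> real \<Rightarrow> real" where
  "tail_mass e s = integral {s..} (\<lambda>x. x powr (1 - e))"

definition tail_bar :: "real \<Rightarrow> real" where
  "tail_bar e = tail_mass e (type_min e)"

definition T0 :: "real \<Rightarrow> real \<Rightarrow> real" where
  "T0 \<gamma> \<beta> = tail_bar \<gamma> * tail_bar \<beta>"

definition traffic :: "real \<Rightarrow> real \<Rightarrow> real \<Rightarrow> real \<Rightarrow> real" where
  "traffic \<gamma> \<beta> xt yt = sqrt (T0 \<gamma> \<beta> * tail_mass \<gamma> xt * tail_mass \<beta> yt)"

definition speed :: "real \<Rightarrow> real \<Rightarrow> real \<Rightarrow> real \<Rightarrow> real" where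
  "speed \<gamma> \<beta> xt yt = T0 \<gamma> \<beta> / traffic \<gamma> \<beta> xt yt"

text \<open>CP fee making the threshold CP type y_t exactly indifferent, when all
  consumers participate (x_t = x_0):
  b = lambda * integral_{x_0}^infty (T_0/T) x^(1-gamma) dx - a.\<close>
definition cp_fee :: "real \<Rightarrow> real \<Rightarrow> real \<Rightarrow> real \<Rightarrow> real \<Rightarrow> real" where
  "cp_fee \<gamma> \<beta> lam a yt =
     lam * integral {type_min \<gamma>..}
        (\<lambda>x. speed \<gamma> \<beta> (type_min \<gamma>) yt * x powr (1 - \<gamma>)) - a"

definition isp_revenue :: "real \<Rightarrow> real \<Rightarrow> real \<Rightarrow> real \<Rightarrow> real \<Rightarrow> real \<Rightarrow> real" where
  "isp_revenue \<gamma> \<beta> lam a c yt =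
     c * integral {type_min \<gamma>..} (\<lambda>x. x powr (- \<gamma>))
     + cp_fee \<gamma> \<beta> lam a yt * tail_mass \<beta> yt"

end

theory Submission
  imports Defs
begin

text \<open>With all consumers on board the speed is \<open>\<surd>(Ybar / Y(y\<^sub>t))\<close>, so the
  indifference fee is \<open>c \<surd>(Ybar / t) - a\<close> with \<open>c = \<lambda> Xbar\<close> and \<open>t = Y(y\<^sub>t)\<close>,
  and the revenue is \<open>(c \<surd>(Ybar / t) - a) t\<close>.  As \<open>y\<^sub>t\<close> ranges over \<open>[y\<^sub>0, \<infinity>)\<close>,
  \<open>t\<close> ranges over \<open>(0, Ybar]\<close>; substituting \<open>t = Ybar v\<^sup>2\<close> turns the revenue into
  the concave quadratic \<open>Ybar (c v - a v\<^sup>2)\<close> on \<open>(0, 1]\<close>, whose unique maximiser is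
  \<open>c / (2a)\<close> when this is below 1 and the boundary point \<open>v = 1\<close> otherwise.
  The fee there is \<open>a\<close>, respectively \<open>c - a\<close>.\<close>

lemma type_min_pos: "e > 2 \<Longrightarrow> type_min e > 0"
  unfolding type_min_def by simp

lemma tail_mass_powr:
  assumes "e > 2" "s > 0"
  shows "tail_mass e s = s powr (2 - e) / (e - 2)"
proof -
  have "((\<lambda>x. x powr (1 - e)) has_integral -(s powr ((1 - e) + 1)) / ((1 - e) + 1)) {s..}"
    by (rule has_integral_powr_to_inf) (use assms in auto)
  then have "tail_mass e s = -(s powr ((1 - e) + 1)) / ((1 - e) + 1)"
    unfolding tail_mass_def by (rule integral_unique)
  then show ?thesis
    using assms by (simp add: field_simps)
qed

lemma tail_bar_powr: "e > 2 \<Longrightarrow> tail_bar e = type_min e powr (2 - e) / (e - 2)"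
  unfolding tail_bar_def by (simp add: tail_mass_powr type_min_pos)

lemma tail_mass_pos: "e > 2 \<Longrightarrow> s > 0 \<Longrightarrow> tail_mass e s > 0"
  by (simp add: tail_mass_powr)

lemma tail_bar_pos: "e > 2 \<Longrightarrow> tail_bar e > 0"
  unfolding tail_bar_def by (simp add: tail_mass_pos type_min_pos)

lemma tail_mass_image:
  assumes "e > 2" "s\<^sub>0 > 0"
  shows "tail_mass e ` {s\<^sub>0..} = {0<..tail_mass e s\<^sub>0}"
proof
  show "tail_mass e ` {s\<^sub>0..} \<subseteq> {0<..tail_mass e s\<^sub>0}"
  proof (rule image_subsetI)
    fix s assume "s \<in> {s\<^sub>0..}"
    then have "s \<ge> s\<^sub>0"
      by simp
    then have "s powr (2 - e) \<le> s\<^sub>0 powr (2 - e)"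
      using assms by (intro powr_mono2') auto
    then show "tail_mass e s \<in> {0<..tail_mass e s\<^sub>0}"
      using assms \<open>s \<ge> s\<^sub>0\<close> by (simp add: tail_mass_powr divide_right_mono)
  qed
next
  show "{0<..tail_mass e s\<^sub>0} \<subseteq> tail_mass e ` {s\<^sub>0..}"
  proof (rule subsetI)
    fix t assume "t \<in> {0<..tail_mass e s\<^sub>0}"
    then have t: "0 < t" "t \<le> tail_mass e s\<^sub>0"
      by auto
    define s where "s = ((e - 2) * t) powr (1 / (2 - e))"
    have "s > 0"
      using t assms by (simp add: s_def)
    have s_powr: "s powr (2 - e) = (e - 2) * t"
      using t assms by (simp add: s_def powr_powr)
    have "s \<ge> s\<^sub>0"
    proof (rule ccontr)
      assume "\<not> s \<ge> s\<^sub>0"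
      then have "s\<^sub>0 powr (2 - e) < s powr (2 - e)"
        using assms \<open>s > 0\<close> by (intro powr_less_mono2_neg) auto
      then show False
        using t assms s_powr by (simp add: tail_mass_powr field_simps)
    qed
    moreover have "tail_mass e s = t"
      using assms \<open>s > 0\<close> s_powr by (simp add: tail_mass_powr)
    ultimately show "t \<in> tail_mass e ` {s\<^sub>0..}"
      by force
  qed
qed

lemma speed_all_consumers:
  assumes "\<gamma> > 2" "\<beta> > 2" "tail_mass \<beta> y > 0"
  shows "speed \<gamma> \<beta> (type_min \<gamma>) y = sqrt (tail_bar \<beta> / tail_mass \<beta> y)"
proof -
  have X: "tail_bar \<gamma> > 0" and Y: "tail_bar \<beta> > 0"
    using assms by (simp_all add: tail_bar_pos)
  have "traffic \<gamma> \<beta> (type_min \<gamma>) y = tail_bar \<gamma> * sqrt (tail_bar \<beta> * tail_mass \<beta> y)"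
    using X unfolding traffic_def T0_def tail_bar_def[of \<gamma>, symmetric]
    by (simp add: real_sqrt_mult ac_simps)
  then show ?thesis
    using X Y assms(3) unfolding speed_def T0_def
    by (simp add: real_sqrt_mult real_sqrt_divide field_simps)
qed

lemma cp_fee_all_consumers:
  assumes "\<gamma> > 2" "\<beta> > 2" "tail_mass \<beta> y > 0"
  shows "cp_fee \<gamma> \<beta> lam a y = lam * tail_bar \<gamma> * sqrt (tail_bar \<beta> / tail_mass \<beta> y) - a"
  using integral_cmul[of "{type_min \<gamma>..}" "speed \<gamma> \<beta> (type_min \<gamma>) y" "\<lambda>x. x powr (1 - \<gamma>)"]
  unfolding cp_fee_def speed_all_consumers[OF assms]
  by (simp add: tail_bar_def tail_mass_def)

lemma isp_revenue_all_consumers: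
  assumes "\<gamma> > 2" "\<beta> > 2" "tail_mass \<beta> y > 0"
  shows "isp_revenue \<gamma> \<beta> lam a 0 y =
    (lam * tail_bar \<gamma> * sqrt (tail_bar \<beta> / tail_mass \<beta> y) - a) * tail_mass \<beta> y"
  by (simp add: isp_revenue_def cp_fee_all_consumers[OF assms])

lemma concave_quadratic_unique_max:
  fixes c a :: real
  assumes "c > 0" "a \<ge> 0"
  defines "v\<^sub>m \<equiv> if a > c / 2 then c / (2 * a) else 1"
  shows "0 < v\<^sub>m" "v\<^sub>m \<le> 1"
    and "\<And>v. 0 < v \<Longrightarrow> v \<le> 1 \<Longrightarrow> v \<noteq> v\<^sub>m \<Longrightarrow> c * v - a * v\<^sup>2 < c * v\<^sub>m - a * v\<^sub>m\<^sup>2"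
proof -
  show "0 < v\<^sub>m" "v\<^sub>m \<le> 1"
    using assms by (auto simp: v\<^sub>m_def field_simps)
next
  fix v :: real assume v: "0 < v" "v \<le> 1" "v \<noteq> v\<^sub>m"
  show "c * v - a * v\<^sup>2 < c * v\<^sub>m - a * v\<^sub>m\<^sup>2"
  proof (cases "a > c / 2")
    case True
    then have "a > 0"
      using assms by linarith
    have "(c * v\<^sub>m - a * v\<^sub>m\<^sup>2) - (c * v - a * v\<^sup>2) = a * (v - v\<^sub>m)\<^sup>2"
      using True \<open>a > 0\<close> by (simp add: v\<^sub>m_def power2_eq_square field_simps)
    moreover have "a * (v - v\<^sub>m)\<^sup>2 > 0"
      using \<open>a > 0\<close> v by simp
    ultimately show ?thesis
      by linarith
  next
    case False
    then have "v < 1" "v\<^sub>m = 1"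
      using v by (auto simp: v\<^sub>m_def)
    have "(c * v\<^sub>m - a * v\<^sub>m\<^sup>2) - (c * v - a * v\<^sup>2) = (1 - v) * (c - a * (1 + v))"
      using \<open>v\<^sub>m = 1\<close> by (simp add: power2_eq_square algebra_simps)
    moreover have "a * (1 + v) < c"
    proof (cases "a = 0")
      case False
      then have "a * (1 + v) < a * 2"
        using assms(2) \<open>v < 1\<close> by (intro mult_strict_left_mono) auto
      then show ?thesis
        using \<open>\<not> a > c / 2\<close> by linarith
    qed (use assms(1) in simp)
    then have "(1 - v) * (c - a * (1 + v)) > 0"
      using \<open>v < 1\<close> by simp
    ultimately show ?thesis
      by linarith
  qed
qed

lemma indifference_revenue_unique_max:
  fixes c a W :: real
  assumes "c > 0" "a \<ge> 0" "W > 0"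
  obtains t where "t \<in> {0<..W}"
    and "\<And>u. u \<in> {0<..W} \<Longrightarrow> u \<noteq> t \<Longrightarrow>
           (c * sqrt (W / u) - a) * u < (c * sqrt (W / t) - a) * t"
    and "c * sqrt (W / t) - a = (if a > c / 2 then a else c - a)"
proof -
  define v\<^sub>m where "v\<^sub>m = (if a > c / 2 then c / (2 * a) else 1)"
  note quad = concave_quadratic_unique_max[OF assms(1,2), folded v\<^sub>m_def]
  have revenue_eq: "(c * sqrt (W / u) - a) * u = W * (c * v - a * v\<^sup>2)"
    if "u = W * v\<^sup>2" "v > 0" for u v
  proof -
    have "sqrt (W / u) = 1 / v"
      using that assms(3) by (simp add: real_sqrt_divide real_sqrt_mult)
    then show ?thesis
      using that by (simp add: power2_eq_square field_simps)
  qed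
  show thesis
  proof
    show "W * v\<^sub>m\<^sup>2 \<in> {0<..W}"
      using quad(1,2) assms(3) by (simp add: power_le_one)
  next
    fix u assume u: "u \<in> {0<..W}" "u \<noteq> W * v\<^sub>m\<^sup>2"
    define v where "v = sqrt (u / W)"
    have v: "0 < v" "v \<le> 1" "u = W * v\<^sup>2"
      using u assms(3) by (auto simp: v_def)
    with u have "v \<noteq> v\<^sub>m"
      by auto
    then have "W * (c * v - a * v\<^sup>2) < W * (c * v\<^sub>m - a * v\<^sub>m\<^sup>2)"
      using quad(3)[OF v(1,2)] assms(3) by simp
    then show "(c * sqrt (W / u) - a) * u < (c * sqrt (W / (W * v\<^sub>m\<^sup>2)) - a) * (W * v\<^sub>m\<^sup>2)"
      by (simp only: revenue_eq[OF v(3,1)] revenue_eq[OF refl quad(1)])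
  next
    have "sqrt (W / (W * v\<^sub>m\<^sup>2)) = 1 / v\<^sub>m"
      using quad(1) assms(3) by (simp add: real_sqrt_divide real_sqrt_mult)
    then show "c * sqrt (W / (W * v\<^sub>m\<^sup>2)) - a = (if a > c / 2 then a else c - a)"
      using assms(1) by (auto simp: v\<^sub>m_def)
  qed
qed

lemma unique_max_through_surjection:
  fixes g :: "'b \<Rightarrow> 'c::linorder"
  assumes "h ` S = T" "t \<in> T" "\<And>u. u \<in> T \<Longrightarrow> u \<noteq> t \<Longrightarrow> g u < g t"
  shows "\<exists>s\<in>S. \<forall>y\<in>S. g (h y) \<le> g (h s)"
    and "\<And>s. s \<in> S \<Longrightarrow> \<forall>y\<in>S. g (h y) \<le> g (h s) \<Longrightarrow> h s = t"
proof -
  obtain s\<^sub>t where "s\<^sub>t \<in> S" "h s\<^sub>t = t"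
    using assms(1,2) by blast
  then show "\<exists>s\<in>S. \<forall>y\<in>S. g (h y) \<le> g (h s)"
    using assms(1,3) by (metis image_eqI order.order_iff_strict)
  show "h s = t" if "s \<in> S" "\<forall>y\<in>S. g (h y) \<le> g (h s)" for s
    using that \<open>s\<^sub>t \<in> S\<close> \<open>h s\<^sub>t = t\<close> assms(1,3) by (metis image_eqI not_less)
qed

theorem theorem1:
  fixes \<gamma> \<beta> lam a :: real
  assumes "\<gamma> > 2" and "\<beta> > 2" and "lam > 0" and "a \<ge> 0"
  shows "(\<exists>yt \<ge> type_min \<beta>. \<forall>y \<ge> type_min \<beta>.
            isp_revenue \<gamma> \<beta> lam a 0 y \<le> isp_revenue \<gamma> \<beta> lam a 0 yt)
       \<and> (\<forall>yt. yt \<ge> type_min \<beta> \<and>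
            (\<forall>y \<ge> type_min \<beta>. isp_revenue \<gamma> \<beta> lam a 0 y \<le> isp_revenue \<gamma> \<beta> lam a 0 yt)
            \<longrightarrow> cp_fee \<gamma> \<beta> lam a yt =
                (if a > lam / 2 * (type_min \<gamma> powr (2 - \<gamma>) / (\<gamma> - 2))
                 then a
                 else lam / (\<gamma> - 2) * type_min \<gamma> powr (2 - \<gamma>) - a))"
proof -
  define c where "c = lam * tail_bar \<gamma>"
  define W where "W = tail_bar \<beta>"
  define R where "R t = (c * sqrt (W / t) - a) * t" for t
  have "c > 0" "W > 0"
    using assms by (simp_all add: c_def W_def tail_bar_pos)
  then obtain t where t: "t \<in> {0<..W}" "\<And>u. u \<in> {0<..W} \<Longrightarrow> u \<noteq> t \<Longrightarrow> R u < R t"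
    and fee_t: "c * sqrt (W / t) - a = (if a > c / 2 then a else c - a)"
    using indifference_revenue_unique_max[OF _ assms(4)] unfolding R_def by metis
  have image: "tail_mass \<beta> ` {type_min \<beta>..} = {0<..W}"
    using assms(2) by (simp add: tail_mass_image type_min_pos W_def tail_bar_def)
  then have Y_pos: "tail_mass \<beta> y > 0" if "y \<ge> type_min \<beta>" for y
    using that by auto
  have revenue: "isp_revenue \<gamma> \<beta> lam a 0 y = R (tail_mass \<beta> y)" if "y \<ge> type_min \<beta>" for y
    using isp_revenue_all_consumers[OF assms(1,2) Y_pos[OF that]] by (simp add: R_def c_def W_def)
  note max = unique_max_through_surjection[where g = R, OF image t]
  have fee: "cp_fee \<gamma> \<beta> lam a yt = c * sqrt (W / t) - a"
    if "yt \<ge> type_min \<beta>" "\<forall>y \<ge> type_min \<beta>. isp_revenue \<gamma> \<beta> lam a 0 y \<le> isp_revenue \<gamma> \<beta> lam a 0 yt" for yt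
  proof -
    have "tail_mass \<beta> yt = t"
      using that revenue by (intro max(2)) auto
    then show ?thesis
      using cp_fee_all_consumers[OF assms(1,2) Y_pos[OF that(1)]] by (simp add: c_def W_def)
  qed
  have "c = lam / (\<gamma> - 2) * type_min \<gamma> powr (2 - \<gamma>)"
    and c_half: "c / 2 = lam / 2 * (type_min \<gamma> powr (2 - \<gamma>) / (\<gamma> - 2))"
    using assms(1) by (simp_all add: c_def tail_bar_powr)
  then show ?thesis
    using max(1) revenue fee unfolding fee_t c_half by (auto simp: atLeast_def)
qed

end
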